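(* Let $a,b>0$ and let $\mathcal{M}_{a,b}(s)=\mathbb{E}\left[(\mathbf{B}'_{a,b}+\mathbf{B}'_{a,b})^s\right]$ for real $s$, where the two summands are independent. Then $\mathcal{M}_{a,b}(s)<\infty$ if and only if $s\in(-2a,b)$.
   Context: For $p,q>0$, $\mathbf{B}'_{p,q}$ denotes a beta prime random variable with density $\frac{\Gamma(p+q)}{\Gamma(p)\Gamma(q)}\frac{x^{p-1}}{(1+x)^{p+q}}$ on $(0,\infty)$. *)

theory Defs
  imports "HOL-Probability.Probability"
begin

definition beta_prime_density :: "real \<Rightarrow> real \<Rightarrow> real \<Rightarrow> real" where
  "beta_prime_density p q x =
     (if 0 < x then Gamma (p + q) / (Gamma p * Gamma q) * x powr (p - 1) / (1 + x) powr (p + q)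
      else 0)"

definition beta_prime_measure :: "real \<Rightarrow> real \<Rightarrow> real measure" where
  "beta_prime_measure p q = density lborel (\<lambda>x. ennreal (beta_prime_density p q x))"

text \<open>M_{a,b}(s) = E[(X+Y)^s] with X, Y independent B'_{a,b}: the joint law of (X,Y)
  is the product measure; the expectation of the nonnegative variable is the
  nonnegative (extended) integral.\<close>
definition Mab :: "real \<Rightarrow> real \<Rightarrow> real \<Rightarrow> ennreal" where
  "Mab a b s = (\<integral>\<^sup>+ z. ennreal ((fst z + snd z) powr s)
                  \<partial>(beta_prime_measure a b \<Otimes>\<^sub>M beta_prime_measure a b))"

end

theory Submission
  imports Defs
begin

(* By independence, M_{a,b}(s) is the integral of f(x) f(y) (x + y)^s over the positive
   quadrant, where the beta prime density f is comparable to x^(a-1) on (0,1] and to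
   x^(-b-1) on [1,oo); hence the moments of order r of f are finite for -a < r < b.
   For -2a < s < b the integrand is dominated by products of such moments, via
   (x + y)^s <= 2^s (x^s + y^s) for s >= 0 and (x + y)^s <= x^(s/2) y^(s/2) for s < 0.
   Conversely, for s >= b the strip x >= 1, 0 < y <= 1, and for s <= -2a the wedge
   0 < y <= x <= 1, contribute at least a multiple of the divergent integral of 1/x. *)

lemma ennreal_eq_top_if_of_nat_le:
  fixes x :: ennreal
  assumes "\<And>n::nat. of_nat n \<le> x"
  shows "x = \<infinity>"
  by (metis assms ennreal_Ex_less_of_nat infinity_ennreal_def less_top not_le)

lemma nn_integral_pair_measure_mult:
  assumes "sigma_finite_measure N" and [measurable]: "f \<in> borel_measurable M" "g \<in> borel_measurable N"
  shows "(\<integral>\<^sup>+z. f (fst z) * g (snd z) \<partial>(M \<Otimes>\<^sub>M N)) = (\<integral>\<^sup>+x. f x \<partial>M) * (\<integral>\<^sup>+y. g y \<partial>N)"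
proof -
  have "(\<integral>\<^sup>+z. f (fst z) * g (snd z) \<partial>(M \<Otimes>\<^sub>M N)) = (\<integral>\<^sup>+x. \<integral>\<^sup>+y. f x * g y \<partial>N \<partial>M)"
    by (subst sigma_finite_measure.nn_integral_fst[OF assms(1), symmetric]) simp_all
  also have "\<dots> = (\<integral>\<^sup>+x. f x * (\<integral>\<^sup>+y. g y \<partial>N) \<partial>M)"
    by (simp add: nn_integral_cmult)
  also have "\<dots> = (\<integral>\<^sup>+x. f x \<partial>M) * (\<integral>\<^sup>+y. g y \<partial>N)"
    by (simp add: nn_integral_multc)
  finally show ?thesis .
qed

lemma nn_integral_powr_from_0:
  fixes e c :: real
  assumes "-1 < e" "0 \<le> c"
  shows "(\<integral>\<^sup>+x\<in>{0..c}. ennreal (x powr e) \<partial>lborel) = ennreal (c powr (e + 1) / (e + 1))"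
  using assms by (intro nn_integral_has_integral_lebesgue' has_integral_powr_from_0) auto

lemma nn_integral_powr_to_inf:
  fixes e c :: real
  assumes "e < -1" "0 < c"
  shows "(\<integral>\<^sup>+x\<in>{c..}. ennreal (x powr e) \<partial>lborel) = ennreal (- (c powr (e + 1)) / (e + 1))"
  using assms by (intro nn_integral_has_integral_lebesgue' has_integral_powr_to_inf) auto

lemma nn_integral_inverse_Icc:
  fixes u v :: real
  assumes "0 < u" "u \<le> v"
  shows "(\<integral>\<^sup>+x\<in>{u..v}. ennreal (1 / x) \<partial>lborel) = ennreal (ln v - ln u)"
  using assms by (intro nn_integral_FTC_Icc) (auto intro!: derivative_eq_intros simp: field_simps)

lemma nn_integral_inverse_atLeast:
  fixes u :: real
  assumes "0 < u"
  shows "(\<integral>\<^sup>+x\<in>{u..}. ennreal (1 / x) \<partial>lborel) = \<infinity>"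
proof (rule ennreal_eq_top_if_of_nat_le)
  fix n :: nat
  have "of_nat n = (\<integral>\<^sup>+x\<in>{u..u * exp n}. ennreal (1 / x) \<partial>lborel)"
    using assms by (subst nn_integral_inverse_Icc) (auto simp: ln_mult ennreal_of_nat_eq_real_of_nat)
  also have "\<dots> \<le> (\<integral>\<^sup>+x\<in>{u..}. ennreal (1 / x) \<partial>lborel)"
    by (intro nn_integral_mono mult_left_mono) (auto split: split_indicator)
  finally show "of_nat n \<le> \<dots>" .
qed

lemma nn_integral_inverse_greaterThanAtMost:
  fixes v :: real
  assumes "0 < v"
  shows "(\<integral>\<^sup>+x\<in>{0<..v}. ennreal (1 / x) \<partial>lborel) = \<infinity>"
proof (rule ennreal_eq_top_if_of_nat_le)
  fix n :: nat
  have "v * exp (- real n) \<le> v"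
    using assms by simp
  then have "of_nat n = (\<integral>\<^sup>+x\<in>{v * exp (- real n)..v}. ennreal (1 / x) \<partial>lborel)"
    using assms by (subst nn_integral_inverse_Icc) (auto simp: ln_mult ennreal_of_nat_eq_real_of_nat)
  also have "\<dots> \<le> (\<integral>\<^sup>+x\<in>{0<..v}. ennreal (1 / x) \<partial>lborel)"
    using assms by (intro nn_integral_mono mult_left_mono)
      (auto split: split_indicator intro: less_le_trans[of 0 "v * exp (- real n)"])
  finally show "of_nat n \<le> \<dots>" .
qed

lemma powr_mult_powr_eq:
  fixes x :: real
  shows "a + b = c \<Longrightarrow> x powr a * x powr b = x powr c"
  by (simp add: powr_add[symmetric])

lemma powr_add_le_two_powr:
  fixes x y s :: real
  assumes "0 \<le> x" "0 \<le> y" "0 \<le> s"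
  shows "(x + y) powr s \<le> 2 powr s * (x powr s + y powr s)"
proof -
  have "(x + y) powr s \<le> (2 * max x y) powr s"
    using assms by (intro powr_mono2) auto
  also have "\<dots> = 2 powr s * max x y powr s"
    using assms by (simp add: powr_mult)
  also have "\<dots> \<le> 2 powr s * (x powr s + y powr s)"
    by (intro mult_left_mono) (auto simp: max_def)
  finally show ?thesis .
qed

lemma powr_add_le_powr_half_mult:
  fixes x y s :: real
  assumes "0 < x" "0 < y" "s \<le> 0"
  shows "(x + y) powr s \<le> x powr (s / 2) * y powr (s / 2)"
proof -
  have "(x + y) powr s = (x + y) powr (s / 2) * (x + y) powr (s / 2)"
    by (simp add: powr_mult_powr_eq)
  also have "\<dots> \<le> x powr (s / 2) * y powr (s / 2)"
    using assms by (intro mult_mono powr_mono2') auto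
  finally show ?thesis .
qed

lemma borel_measurable_beta_prime_density [measurable]:
  "beta_prime_density p q \<in> borel_measurable borel"
  unfolding beta_prime_density_def by measurable

lemma beta_prime_density_nonpos:
  "x \<le> 0 \<Longrightarrow> beta_prime_density p q x = 0"
  by (simp add: beta_prime_density_def)

lemma beta_prime_density_nonneg:
  assumes "0 < p" "0 < q"
  shows "0 \<le> beta_prime_density p q x"
  using assms by (simp add: beta_prime_density_def Gamma_real_pos)

lemma beta_prime_density_eq:
  "0 < x \<Longrightarrow> beta_prime_density p q x
     = Gamma (p + q) / (Gamma p * Gamma q) * x powr (p - 1) / (1 + x) powr (p + q)"
  by (simp add: beta_prime_density_def)

lemma beta_prime_density_bounds_at_0:
  fixes p q :: real
  assumes "0 < p" "0 < q"
  obtains c C where "0 < c" "0 < C"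
    "\<And>x. 0 < x \<Longrightarrow> x \<le> 1 \<Longrightarrow> c * x powr (p - 1) \<le> beta_prime_density p q x"
    "\<And>x. 0 < x \<Longrightarrow> x \<le> 1 \<Longrightarrow> beta_prime_density p q x \<le> C * x powr (p - 1)"
proof
  define K where "K = Gamma (p + q) / (Gamma p * Gamma q)"
  show "0 < K / 2 powr (p + q)" "0 < K"
    using assms by (simp_all add: K_def Gamma_real_pos)
  fix x :: real
  assume x: "0 < x" "x \<le> 1"
  have "1 \<le> (1 + x) powr (p + q)" "(1 + x) powr (p + q) \<le> 2 powr (p + q)"
    using assms x by (auto intro: ge_one_powr_ge_zero powr_mono2)
  moreover have "0 \<le> K * x powr (p - 1)"
    using \<open>0 < K\<close> by simp
  ultimately have "K * x powr (p - 1) / 2 powr (p + q) \<le> K * x powr (p - 1) / (1 + x) powr (p + q)"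
    and "K * x powr (p - 1) / (1 + x) powr (p + q) \<le> K * x powr (p - 1) / 1"
    using x by (intro frac_le; simp)+
  then show "K / 2 powr (p + q) * x powr (p - 1) \<le> beta_prime_density p q x"
    and "beta_prime_density p q x \<le> K * x powr (p - 1)"
    using x by (simp_all add: beta_prime_density_eq K_def)
qed

lemma beta_prime_density_bounds_at_top:
  fixes p q :: real
  assumes "0 < p" "0 < q"
  obtains c C where "0 < c" "0 < C"
    "\<And>x. 1 \<le> x \<Longrightarrow> c * x powr (- q - 1) \<le> beta_prime_density p q x"
    "\<And>x. 1 \<le> x \<Longrightarrow> beta_prime_density p q x \<le> C * x powr (- q - 1)"
proof
  define K where "K = Gamma (p + q) / (Gamma p * Gamma q)"
  show "0 < K / 2 powr (p + q)" "0 < K"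
    using assms by (simp_all add: K_def Gamma_real_pos)
  fix x :: real
  assume x: "1 \<le> x"
  have "x powr (p + q) \<le> (1 + x) powr (p + q)" "(1 + x) powr (p + q) \<le> 2 powr (p + q) * x powr (p + q)"
    using assms x powr_mono2[of "p + q" "1 + x" "2 * x"] by (auto intro: powr_mono2 simp: powr_mult)
  moreover have "0 \<le> K * x powr (p - 1)"
    using \<open>0 < K\<close> by simp
  ultimately have "K * x powr (p - 1) / (2 powr (p + q) * x powr (p + q)) \<le> K * x powr (p - 1) / (1 + x) powr (p + q)"
    and "K * x powr (p - 1) / (1 + x) powr (p + q) \<le> K * x powr (p - 1) / x powr (p + q)"
    using x by (intro frac_le; simp)+
  moreover have "x powr (p - 1) = x powr (- q - 1) * x powr (p + q)"
    by (rule powr_mult_powr_eq[symmetric]) simp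
  ultimately show "K / 2 powr (p + q) * x powr (- q - 1) \<le> beta_prime_density p q x"
    and "beta_prime_density p q x \<le> K * x powr (- q - 1)"
    using x by (simp_all add: beta_prime_density_eq K_def)
qed

lemma nn_integral_beta_prime_moment_finite:
  fixes p q r :: real
  assumes "0 < p" "0 < q" "- p < r" "r < q"
  shows "(\<integral>\<^sup>+x. ennreal (beta_prime_density p q x * x powr r) \<partial>lborel) < \<infinity>"
proof -
  obtain C0 where "0 < C0" and C0: "\<And>x. 0 < x \<Longrightarrow> x \<le> 1 \<Longrightarrow> beta_prime_density p q x \<le> C0 * x powr (p - 1)"
    using beta_prime_density_bounds_at_0[OF assms(1,2)] by metis
  obtain C1 where "0 < C1" and C1: "\<And>x. 1 \<le> x \<Longrightarrow> beta_prime_density p q x \<le> C1 * x powr (- q - 1)"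
    using beta_prime_density_bounds_at_top[OF assms(1,2)] by metis
  have "ennreal (beta_prime_density p q x * x powr r)
     \<le> ennreal C0 * (ennreal (x powr (p + r - 1)) * indicator {0..1} x)
       + ennreal C1 * (ennreal (x powr (r - q - 1)) * indicator {1..} x)" for x :: real
  proof (cases "0 < x")
    case False
    then show ?thesis
      by (simp add: beta_prime_density_nonpos)
  next
    case True
    show ?thesis
    proof (cases "x \<le> 1")
      case True
      have "beta_prime_density p q x * x powr r \<le> C0 * x powr (p - 1) * x powr r"
        using C0 \<open>0 < x\<close> True by (simp add: mult_right_mono)
      also have "\<dots> = C0 * x powr (p + r - 1)"
        using powr_mult_powr_eq[of "p - 1" r "p + r - 1" x] by (simp add: mult.assoc)
      finally have "ennreal (beta_prime_density p q x * x powr r)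
          \<le> ennreal C0 * (ennreal (x powr (p + r - 1)) * indicator {0..1} x)"
        using \<open>0 < x\<close> \<open>0 < C0\<close> True by (simp add: ennreal_mult[symmetric] ennreal_leI)
      then show ?thesis
        by (rule order_trans) simp
    next
      case False
      have "beta_prime_density p q x * x powr r \<le> C1 * x powr (- q - 1) * x powr r"
        using C1 False by (simp add: mult_right_mono)
      also have "\<dots> = C1 * x powr (r - q - 1)"
        using powr_mult_powr_eq[of "- q - 1" r "r - q - 1" x] by (simp add: mult.assoc)
      finally have "ennreal (beta_prime_density p q x * x powr r)
          \<le> ennreal C1 * (ennreal (x powr (r - q - 1)) * indicator {1..} x)"
        using \<open>0 < C1\<close> False by (simp add: ennreal_mult[symmetric] ennreal_leI)
      then show ?thesis
        by (rule order_trans) simp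
    qed
  qed
  then have "(\<integral>\<^sup>+x. ennreal (beta_prime_density p q x * x powr r) \<partial>lborel)
     \<le> ennreal C0 * (\<integral>\<^sup>+x\<in>{0..1}. ennreal (x powr (p + r - 1)) \<partial>lborel)
       + ennreal C1 * (\<integral>\<^sup>+x\<in>{1..}. ennreal (x powr (r - q - 1)) \<partial>lborel)"
    by (subst nn_integral_cmult[symmetric] nn_integral_add[symmetric], simp_all)+
      (rule nn_integral_mono)
  also have "\<dots> < \<infinity>"
    using assms by (simp add: nn_integral_powr_from_0 nn_integral_powr_to_inf ennreal_mult_less_top)
  finally show ?thesis .
qed

lemma nn_integral_beta_prime_pair_moment_finite:
  fixes p q r t :: real
  assumes "0 < p" "0 < q" "- p < r" "r < q" "- p < t" "t < q"
  shows "(\<integral>\<^sup>+z. ennreal (beta_prime_density p q (fst z) * fst z powr r)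
              * ennreal (beta_prime_density p q (snd z) * snd z powr t) \<partial>(lborel \<Otimes>\<^sub>M lborel)) < \<infinity>"
proof -
  let ?f = "\<lambda>r x. ennreal (beta_prime_density p q x * x powr r)"
  have "(\<integral>\<^sup>+z. ?f r (fst z) * ?f t (snd z) \<partial>(lborel \<Otimes>\<^sub>M lborel))
      = (\<integral>\<^sup>+x. ?f r x \<partial>lborel) * (\<integral>\<^sup>+y. ?f t y \<partial>lborel)"
    by (rule nn_integral_pair_measure_mult[OF lborel.sigma_finite_measure_axioms]) measurable
  then show ?thesis
    using assms nn_integral_beta_prime_moment_finite[of p q r] nn_integral_beta_prime_moment_finite[of p q t]
    by (simp add: ennreal_mult_less_top)
qed

lemma Mab_eq_nn_integral_lborel:
  assumes "0 < a" "0 < b"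
  shows "Mab a b s = (\<integral>\<^sup>+z. ennreal (beta_prime_density a b (fst z) * beta_prime_density a b (snd z)
                                        * (fst z + snd z) powr s) \<partial>(lborel \<Otimes>\<^sub>M lborel))"
proof -
  let ?d = "\<lambda>x. ennreal (beta_prime_density a b x)"
  have "sigma_finite_measure (density lborel ?d)"
    by (subst sigma_finite_measure.sigma_finite_iff_density_finite[OF lborel.sigma_finite_measure_axioms]) auto
  then have "beta_prime_measure a b \<Otimes>\<^sub>M beta_prime_measure a b
      = density (lborel \<Otimes>\<^sub>M lborel) (\<lambda>(x, y). ?d x * ?d y)"
    unfolding beta_prime_measure_def
    by (intro pair_measure_density) (auto simp: lborel.sigma_finite_measure_axioms)
  then show ?thesis
    using assms unfolding Mab_def
    by (simp add: nn_integral_density case_prod_beta ennreal_mult[symmetric] beta_prime_density_nonneg)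
qed

lemma Mab_finite:
  assumes "0 < a" "0 < b" "- 2 * a < s" "s < b"
  shows "Mab a b s < \<infinity>"
proof -
  let ?d = "beta_prime_density a b"
  let ?m = "\<lambda>r x. ennreal (?d x * x powr r)"
  have pair_finite: "(\<integral>\<^sup>+z. ?m r (fst z) * ?m t (snd z) \<partial>(lborel \<Otimes>\<^sub>M lborel)) < \<infinity>"
    if "- a < r" "r < b" "- a < t" "t < b" for r t
    using assms that by (intro nn_integral_beta_prime_pair_moment_finite) auto
  show ?thesis
  proof (cases "0 \<le> s")
    case True
    have "ennreal (?d x * ?d y * (x + y) powr s) \<le> ennreal (2 powr s) * (?m s x * ?m 0 y + ?m 0 x * ?m s y)"
      for x y
    proof (cases "0 < x \<and> 0 < y")
      case True
      have "?d x * ?d y * (x + y) powr s \<le> ?d x * ?d y * (2 powr s * (x powr s + y powr s))"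
        using True \<open>0 \<le> s\<close> assms
        by (intro mult_left_mono powr_add_le_two_powr) (auto simp: beta_prime_density_nonneg)
      then show ?thesis
        using True assms
        by (simp add: ennreal_mult[symmetric] ennreal_plus[symmetric] beta_prime_density_nonneg
            algebra_simps del: ennreal_plus)
    qed (auto simp: beta_prime_density_def)
    then have "Mab a b s \<le> (\<integral>\<^sup>+z. ennreal (2 powr s) * (?m s (fst z) * ?m 0 (snd z) + ?m 0 (fst z) * ?m s (snd z))
                                 \<partial>(lborel \<Otimes>\<^sub>M lborel))"
      using assms by (simp add: Mab_eq_nn_integral_lborel nn_integral_mono)
    also have "\<dots> = ennreal (2 powr s) * ((\<integral>\<^sup>+z. ?m s (fst z) * ?m 0 (snd z) \<partial>(lborel \<Otimes>\<^sub>M lborel))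
                                        + (\<integral>\<^sup>+z. ?m 0 (fst z) * ?m s (snd z) \<partial>(lborel \<Otimes>\<^sub>M lborel)))"
      by (simp add: nn_integral_cmult nn_integral_add)
    also have "\<dots> < \<infinity>"
      using pair_finite[of s 0] pair_finite[of 0 s] assms True by (simp add: ennreal_mult_less_top)
    finally show ?thesis .
  next
    case False
    have "ennreal (?d x * ?d y * (x + y) powr s) \<le> ?m (s / 2) x * ?m (s / 2) y" for x y
    proof (cases "0 < x \<and> 0 < y")
      case True
      have "?d x * ?d y * (x + y) powr s \<le> ?d x * ?d y * (x powr (s / 2) * y powr (s / 2))"
        using True False assms
        by (intro mult_left_mono powr_add_le_powr_half_mult) (auto simp: beta_prime_density_nonneg)
      then show ?thesis
        using True assms
        by (simp add: ennreal_mult[symmetric] beta_prime_density_nonneg ennreal_leI mult_ac)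
    qed (auto simp: beta_prime_density_def)
    then have "Mab a b s \<le> (\<integral>\<^sup>+z. ?m (s / 2) (fst z) * ?m (s / 2) (snd z) \<partial>(lborel \<Otimes>\<^sub>M lborel))"
      using assms by (simp add: Mab_eq_nn_integral_lborel nn_integral_mono)
    also have "\<dots> < \<infinity>"
      using pair_finite[of "s / 2" "s / 2"] assms False by simp
    finally show ?thesis .
  qed
qed

lemma Mab_infinite_if_ge:
  assumes "0 < a" "0 < b" "b \<le> s"
  shows "Mab a b s = \<infinity>"
proof -
  let ?d = "beta_prime_density a b"
  obtain c0 where "0 < c0" and c0: "\<And>y. 0 < y \<Longrightarrow> y \<le> 1 \<Longrightarrow> c0 * y powr (a - 1) \<le> ?d y"
    using beta_prime_density_bounds_at_0[OF assms(1,2)] by metis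
  obtain c1 where "0 < c1" and c1: "\<And>x. 1 \<le> x \<Longrightarrow> c1 * x powr (- b - 1) \<le> ?d x"
    using beta_prime_density_bounds_at_top[OF assms(1,2)] by metis
  let ?f = "\<lambda>x. ennreal c1 * (ennreal (1 / x) * indicator {1..} x)"
  let ?g = "\<lambda>y. ennreal c0 * (ennreal (y powr (a - 1)) * indicator {0..1} y)"
  have "?f x * ?g y \<le> ennreal (?d x * ?d y * (x + y) powr s)" for x y
  proof (cases "1 \<le> x \<and> 0 < y \<and> y \<le> 1")
    case True
    have "c1 * (1 / x) = c1 * x powr (- 1)"
      using True by (simp add: powr_minus_divide)
    also have "\<dots> \<le> c1 * x powr (s - b - 1)"
      using True assms \<open>0 < c1\<close> by (intro mult_left_mono powr_mono) auto
    also have "\<dots> = c1 * (x powr (- b - 1) * x powr s)"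
      using powr_mult_powr_eq[of "- b - 1" s "s - b - 1" x] by simp
    also have "\<dots> \<le> ?d x * (x + y) powr s"
      using True assms c1[of x] \<open>0 < c1\<close>
      by (simp only: mult.assoc[symmetric]) (intro mult_mono powr_mono2; simp add: beta_prime_density_nonneg)
    finally have hx: "c1 * (1 / x) \<le> ?d x * (x + y) powr s" .
    have "c1 * (1 / x) * (c0 * y powr (a - 1)) \<le> ?d x * (x + y) powr s * ?d y"
      by (rule mult_mono[OF hx c0])
        (use True \<open>0 < c0\<close> assms in \<open>auto simp: beta_prime_density_nonneg\<close>)
    then show ?thesis
      using True \<open>0 < c1\<close> \<open>0 < c0\<close>
      by (simp add: ennreal_mult[symmetric] ennreal_leI mult_ac)
  qed (auto split: split_indicator)
  then have "(\<integral>\<^sup>+z. ?f (fst z) * ?g (snd z) \<partial>(lborel \<Otimes>\<^sub>M lborel)) \<le> Mab a b s"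
    using assms by (simp add: Mab_eq_nn_integral_lborel nn_integral_mono)
  moreover have "(\<integral>\<^sup>+z. ?f (fst z) * ?g (snd z) \<partial>(lborel \<Otimes>\<^sub>M lborel))
      = (\<integral>\<^sup>+x. ?f x \<partial>lborel) * (\<integral>\<^sup>+y. ?g y \<partial>lborel)"
    by (rule nn_integral_pair_measure_mult[OF lborel.sigma_finite_measure_axioms]) measurable
  moreover have "(\<integral>\<^sup>+x. ?f x \<partial>lborel) = \<infinity>"
    using \<open>0 < c1\<close> by (simp add: nn_integral_cmult nn_integral_inverse_atLeast ennreal_mult_top)
  moreover have "(\<integral>\<^sup>+y. ?g y \<partial>lborel) = ennreal (c0 / a)"
    using assms \<open>0 < c0\<close> by (simp add: nn_integral_cmult nn_integral_powr_from_0 ennreal_mult[symmetric])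
  ultimately show ?thesis
    using assms \<open>0 < c0\<close> by (simp add: ennreal_top_mult top_unique)
qed

lemma Mab_infinite_if_le:
  assumes "0 < a" "0 < b" "s \<le> - 2 * a"
  shows "Mab a b s = \<infinity>"
proof -
  let ?d = "beta_prime_density a b"
  obtain c where "0 < c" and c: "\<And>x. 0 < x \<Longrightarrow> x \<le> 1 \<Longrightarrow> c * x powr (a - 1) \<le> ?d x"
    using beta_prime_density_bounds_at_0[OF assms(1,2)] by metis
  define K where "K = c\<^sup>2 * 2 powr s"
  have "0 < K"
    using \<open>0 < c\<close> by (simp add: K_def)
  have inner: "ennreal (K * x powr (a - 1 + s)) * indicator {0<..1} x * (ennreal (y powr (a - 1)) * indicator {0..x} y)
      \<le> ennreal (?d x * ?d y * (x + y) powr s)" for x y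
  proof (cases "0 < x \<and> x \<le> 1 \<and> 0 < y \<and> y \<le> x")
    case True
    have "(2 * x) powr s \<le> (x + y) powr s"
      using True assms by (intro powr_mono2') auto
    then have "2 powr s * x powr s \<le> (x + y) powr s"
      using True by (simp add: powr_mult)
    then have "c * x powr (a - 1) * (c * y powr (a - 1)) * (2 powr s * x powr s) \<le> ?d x * ?d y * (x + y) powr s"
      using True c[of x] c[of y] \<open>0 < c\<close> assms
      by (intro mult_mono) (auto simp: beta_prime_density_nonneg)
    moreover have "c * x powr (a - 1) * (c * y powr (a - 1)) * (2 powr s * x powr s)
        = K * x powr (a - 1 + s) * y powr (a - 1)"
      unfolding K_def powr_mult_powr_eq[OF refl, symmetric] by (simp add: power2_eq_square mult_ac)
    ultimately show ?thesis
      using True \<open>0 < K\<close> by (simp add: ennreal_mult[symmetric] ennreal_leI)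
  qed (auto split: split_indicator)
  have outer: "ennreal (K / a) * ennreal (1 / x) \<le> ennreal (K * x powr (a - 1 + s)) * ennreal (x powr a / a)"
    if "0 < x" "x \<le> 1" for x
  proof -
    have "K / a * (1 / x) = K / a * x powr (- 1)"
      using that by (simp add: powr_minus_divide)
    also have "\<dots> \<le> K / a * x powr (2 * a - 1 + s)"
      using that assms \<open>0 < K\<close> by (intro mult_left_mono powr_mono') auto
    also have "\<dots> = K * x powr (a - 1 + s) * (x powr a / a)"
      using powr_mult_powr_eq[of "a - 1 + s" a "2 * a - 1 + s" x] by (simp add: field_simps)
    finally show ?thesis
      using that \<open>0 < K\<close> assms by (simp add: ennreal_mult[symmetric] ennreal_leI)
  qed
  have "\<infinity> = ennreal (K / a) * (\<integral>\<^sup>+x\<in>{0<..1}. ennreal (1 / x) \<partial>lborel)"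
    using \<open>0 < K\<close> assms by (simp add: nn_integral_inverse_greaterThanAtMost ennreal_mult_top)
  also have "\<dots> \<le> (\<integral>\<^sup>+x. ennreal (K * x powr (a - 1 + s)) * indicator {0<..1} x
                      * (\<integral>\<^sup>+y\<in>{0..x}. ennreal (y powr (a - 1)) \<partial>lborel) \<partial>lborel)"
    using assms outer
    by (subst nn_integral_cmult[symmetric]) (auto intro!: nn_integral_mono simp: nn_integral_powr_from_0 split: split_indicator)
  also have "\<dots> \<le> (\<integral>\<^sup>+x. \<integral>\<^sup>+y. ennreal (?d x * ?d y * (x + y) powr s) \<partial>lborel \<partial>lborel)"
    using inner by (simp add: nn_integral_cmult[symmetric] nn_integral_mono)
  also have "\<dots> = Mab a b s"
    using assms by (simp add: Mab_eq_nn_integral_lborel lborel.nn_integral_fst[symmetric])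
  finally show ?thesis
    by (simp add: top_unique)
qed

theorem proposition4:
  fixes a b s :: real
  assumes "0 < a" and "0 < b"
  shows "Mab a b s < \<infinity> \<longleftrightarrow> (-2 * a < s \<and> s < b)"
  using Mab_finite[OF assms] Mab_infinite_if_ge[OF assms] Mab_infinite_if_le[OF assms]
  by (metis linorder_not_le infinity_ennreal_def less_irrefl)

end
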